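(* Let $m,n\ge 1$. Under optimal play, the Sign Game on the complete bipartite graph $K_{m,n}$ is won by Player 2 when both $m$ and $n$ are odd, and results in a draw when at least one of $m,n$ is even.
   Context: The Sign Game on a finite simple undirected graph $G$: two players, Player P and Player N, alternate turns; the player who moves first is called Player 1 and the other Player 2 (either of P, N may be Player 1). On a turn, a player chooses a vertex of $G$ not yet assigned a value and assigns it $+1$ or $-1$. The game ends when every vertex has been assigned. The score of an edge $uv$ is the product of the values of $u$ and $v$, and the score $s(G)$ of the game is the sum of the scores of all edges. Player P wins if $s(G)>0$, Player N wins if $s(G)<0$, and the game is a draw if $s(G)=0$. "Under optimal play" means both players play optimally, each with primary goal of winning and secondary goal of at least drawing; the result is the outcome of this finite perfect-information game under such play. $K_{m,n}$ is the complete bipartite graph with parts of sizes $m$ and $n$, every vertex of one part adjacent to every vertex of the other and no other edges. *)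

theory Defs
  imports Main
begin

text \<open>A (partial) assignment is a function f :: 'v => int where
f v = 0 means "not yet assigned" and f v = 1 or f v = -1 is the assigned value.\<close>

definition sign_score :: "'v set set \<Rightarrow> ('v \<Rightarrow> int) \<Rightarrow> int" where
  "sign_score E f = (\<Sum>e\<in>E. \<Prod>v\<in>e. f v)"

text \<open>Minimax value of the game, measured as sgn of the final score
(1 = Player P wins, 0 = draw, -1 = Player N wins). k = number of moves left,
p = True iff it is Player P's turn. P maximises, N minimises; this is exactly
optimal play with primary goal winning and secondary goal drawing.\<close>

primrec sign_game_val :: "'v set \<Rightarrow> 'v set set \<Rightarrow> nat \<Rightarrow> ('v \<Rightarrow> int) \<Rightarrow> bool \<Rightarrow> int" where
  "sign_game_val V E 0 f p = sgn (sign_score E f)"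
| "sign_game_val V E (Suc k) f p =
     (let opts = {sign_game_val V E k (f(v := s)) (\<not> p) | v s. v \<in> V \<and> f v = 0 \<and> s \<in> {1, -1}}
      in if p then Max opts else Min opts)"

text \<open>Outcome under optimal play from the empty position; pfirst = True iff
Player P is Player 1 (moves first).\<close>

definition sign_game_outcome :: "'v set \<Rightarrow> 'v set set \<Rightarrow> bool \<Rightarrow> int" where
  "sign_game_outcome V E pfirst = sign_game_val V E (card V) (\<lambda>_. 0) pfirst"

definition Kmn_vertices :: "nat \<Rightarrow> nat \<Rightarrow> (nat + nat) set" where
  "Kmn_vertices m n = Inl ` {..<m} \<union> Inr ` {..<n}"

definition Kmn_edges :: "nat \<Rightarrow> nat \<Rightarrow> (nat + nat) set set" where
  "Kmn_edges m n = {{Inl i, Inr j} | i j. i < m \<and> j < n}"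

end

theory Submission
  imports Defs
begin

(* On K_{m,n} the score is the product a b of the two side sums, so a position is described by
   a, b and the numbers ra, rb of unassigned vertices on each side. Two more unassigned vertices
   on one side never change the minimax value: this is a finite check, because over at most one
   remaining move per side the value depends only on the signs of a + d and b + d for |d| <= 2.
   Hence only the parities of m and n matter. Starting from a = b = 0, if one side is even its
   sum stays 0 and the game is drawn; if both are odd, Player 1 makes one side sum nonzero and
   Player 2 then chooses the sign of the other, and with it the sign of the score. *)

definition optimum :: "bool \<Rightarrow> int set \<Rightarrow> int" where
  "optimum p S = (if p then Max S else Min S)"

definition choices :: "bool \<Rightarrow> (int \<Rightarrow> int) \<Rightarrow> int set" where
  "choices h F = (if h then {F 1, F (-1)} else {})"

lemma choices_cong: "(\<And>s. h \<Longrightarrow> F s = G s) \<Longrightarrow> choices h F = choices h G"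
  by (simp add: choices_def)

lemma Setcompr_eq_choices:
  assumes "\<And>i s. P i \<Longrightarrow> s \<in> {1, -1} \<Longrightarrow> F i s = G s"
  shows "{F i s | i s. P i \<and> s \<in> {1, -1}} = choices (\<exists>i. P i) G"
  using assms by (auto simp: choices_def; metis)

fun sums_game_val :: "nat \<Rightarrow> int \<Rightarrow> int \<Rightarrow> nat \<Rightarrow> nat \<Rightarrow> bool \<Rightarrow> int" where
  "sums_game_val 0 a b ra rb p = sgn (a * b)"
| "sums_game_val (Suc k) a b ra rb p =
     optimum p (choices (ra > 0) (\<lambda>s. sums_game_val k (a + s) b (ra - 1) rb (\<not> p))
              \<union> choices (rb > 0) (\<lambda>s. sums_game_val k a (b + s) ra (rb - 1) (\<not> p)))"

definition parity_val :: "int \<Rightarrow> int \<Rightarrow> bool \<Rightarrow> bool \<Rightarrow> bool \<Rightarrow> int" where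
  "parity_val a b oa ob p = sums_game_val (of_bool oa + of_bool ob) a b (of_bool oa) (of_bool ob) p"

lemma parity_val_even_even: "parity_val a b False False p = sgn a * sgn b"
  by (simp add: parity_val_def sgn_mult)

lemma parity_val_odd_even:
  "parity_val a b True False p = optimum p {sgn (a + 1) * sgn b, sgn (a - 1) * sgn b}"
  by (simp add: parity_val_def choices_def sgn_mult)

lemma parity_val_even_odd:
  "parity_val a b False True p = optimum p {sgn a * sgn (b + 1), sgn a * sgn (b - 1)}"
  by (simp add: parity_val_def choices_def sgn_mult)

lemma parity_val_odd_odd:
  "parity_val a b True True p = optimum p
     {parity_val (a + 1) b False True (\<not> p), parity_val (a - 1) b False True (\<not> p),
      parity_val a (b + 1) True False (\<not> p), parity_val a (b - 1) True False (\<not> p)}"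
  by (simp add: parity_val_def choices_def numeral_eq_Suc insert_commute)

lemmas parity_val_simps =
  parity_val_even_even parity_val_odd_even parity_val_even_odd parity_val_odd_odd

lemma sgn_neighbourhood_cases:
  fixes a :: int
  obtains "sgn (a - 2) = -1" "sgn (a - 1) = -1" "sgn a = -1" "sgn (a + 1) = -1" "sgn (a + 2) = -1"
  | "sgn (a - 2) = -1" "sgn (a - 1) = -1" "sgn a = -1" "sgn (a + 1) = -1" "sgn (a + 2) = 0"
  | "sgn (a - 2) = -1" "sgn (a - 1) = -1" "sgn a = -1" "sgn (a + 1) = 0" "sgn (a + 2) = 1"
  | "sgn (a - 2) = -1" "sgn (a - 1) = -1" "sgn a = 0" "sgn (a + 1) = 1" "sgn (a + 2) = 1"
  | "sgn (a - 2) = -1" "sgn (a - 1) = 0" "sgn a = 1" "sgn (a + 1) = 1" "sgn (a + 2) = 1"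
  | "sgn (a - 2) = 0" "sgn (a - 1) = 1" "sgn a = 1" "sgn (a + 1) = 1" "sgn (a + 2) = 1"
  | "sgn (a - 2) = 1" "sgn (a - 1) = 1" "sgn a = 1" "sgn (a + 1) = 1" "sgn (a + 2) = 1"
proof -
  consider "a \<le> -3" | "a = -2" | "a = -1" | "a = 0" | "a = 1" | "a = 2" | "a \<ge> 3" by linarith
  then show ?thesis using that by cases (simp_all add: sgn_if)
qed

(* ha, hb: whether each side has an unassigned vertex; oa, ob: whether their numbers are odd. *)
lemma parity_val_step:
  assumes "ha \<or> hb" "oa \<longrightarrow> ha" "ob \<longrightarrow> hb"
  shows "parity_val a b oa ob p =
    optimum p (choices ha (\<lambda>s. parity_val (a + s) b (\<not> oa) ob (\<not> p))
             \<union> choices hb (\<lambda>s. parity_val a (b + s) oa (\<not> ob) (\<not> p)))"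
proof -
  have shifts: "a + 1 + 1 = a + 2" "a - 1 - 1 = a - 2" "a + 1 - 1 = a" "a - 1 + 1 = a"
    "b + 1 + 1 = b + 2" "b - 1 - 1 = b - 2" "b + 1 - 1 = b" "b - 1 + 1 = b"
    by simp_all
  show ?thesis
    using assms
    apply (cases ha; cases hb; cases oa; cases ob; cases p)
     apply (simp_all only: parity_val_simps choices_def optimum_def add_uminus_conv_diff shifts
        if_True if_False simp_thms Un_empty_left Un_empty_right
        insert_is_Un[symmetric] Un_insert_left)
    apply (cases rule: sgn_neighbourhood_cases[of a]; cases rule: sgn_neighbourhood_cases[of b];
        simp only:; simp)+
    done
qed

lemma sums_game_val_eq_parity_val:
  "k = ra + rb \<Longrightarrow> sums_game_val k a b ra rb p = parity_val a b (odd ra) (odd rb) p"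
proof (induction k arbitrary: a b ra rb p)
  case 0
  then show ?case by (simp add: parity_val_even_even sgn_mult)
next
  case (Suc k)
  have "choices (ra > 0) (\<lambda>s. sums_game_val k (a + s) b (ra - 1) rb (\<not> p))
      = choices (ra > 0) (\<lambda>s. parity_val (a + s) b (\<not> odd ra) (odd rb) (\<not> p))"
    using Suc.prems by (intro choices_cong) (simp add: Suc.IH)
  moreover have "choices (rb > 0) (\<lambda>s. sums_game_val k a (b + s) ra (rb - 1) (\<not> p))
      = choices (rb > 0) (\<lambda>s. parity_val a (b + s) (odd ra) (\<not> odd rb) (\<not> p))"
    using Suc.prems by (intro choices_cong) (simp add: Suc.IH)
  moreover have "ra > 0 \<or> rb > 0" "odd ra \<longrightarrow> ra > 0" "odd rb \<longrightarrow> rb > 0"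
    using Suc.prems by (auto intro: odd_pos)
  ultimately show ?case
    by (simp only: sums_game_val.simps parity_val_step)
qed

definition unassigned :: "nat \<Rightarrow> (nat \<Rightarrow> int) \<Rightarrow> nat" where
  "unassigned m g = card {i. i < m \<and> g i = 0}"

lemma unassigned_pos_iff: "0 < unassigned m g \<longleftrightarrow> (\<exists>i<m. g i = 0)"
  by (auto simp: unassigned_def card_gt_0_iff)

lemma unassigned_fun_upd:
  assumes "i < m" "g i = 0" "s \<noteq> 0"
  shows "unassigned m (g(i := s)) = unassigned m g - 1"
proof -
  have "{j. j < m \<and> (g(i := s)) j = 0} = {j. j < m \<and> g j = 0} - {i}"
    using assms by auto
  then show ?thesis
    using assms by (simp add: unassigned_def)
qed

lemma sum_fun_upd:
  fixes g :: "'a \<Rightarrow> 'b::ab_group_add"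
  assumes "finite S" "i \<in> S"
  shows "sum (g(i := s)) S = sum g S - g i + s"
  using assms by (simp add: sum.remove[of S i] algebra_simps)

lemma sign_score_Kmn:
  "sign_score (Kmn_edges m n) f = sum (f \<circ> Inl) {..<m} * sum (f \<circ> Inr) {..<n}"
proof -
  have edges: "Kmn_edges m n = (\<lambda>(i, j). {Inl i, Inr j}) ` ({..<m} \<times> {..<n})"
    unfolding Kmn_edges_def by auto
  have inj: "inj_on (\<lambda>(i, j). {Inl i, Inr j}) ({..<m} \<times> {..<n})"
    by (auto simp: inj_on_def doubleton_eq_iff)
  have "sign_score (Kmn_edges m n) f = (\<Sum>(i, j)\<in>{..<m} \<times> {..<n}. f (Inl i) * f (Inr j))"
    unfolding sign_score_def edges sum.reindex[OF inj] by (intro sum.cong) auto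
  then show ?thesis
    by (simp add: sum.cartesian_product sum_product)
qed

lemma card_Kmn_vertices: "card (Kmn_vertices m n) = m + n"
  unfolding Kmn_vertices_def by (subst card_Un_disjoint) (auto simp: card_image)

lemma Kmn_fun_upd_Inl:
  assumes "i < m" "f (Inl i) = 0" "s \<noteq> 0"
  shows "sum (f(Inl i := s) \<circ> Inl) {..<m} = sum (f \<circ> Inl) {..<m} + s"
    and "unassigned m (f(Inl i := s) \<circ> Inl) = unassigned m (f \<circ> Inl) - 1"
    and "f(Inl i := s) \<circ> Inr = f \<circ> Inr"
proof -
  have upd: "f(Inl i := s) \<circ> Inl = (f \<circ> Inl)(i := s)"
    by (auto simp: fun_eq_iff)
  show "sum (f(Inl i := s) \<circ> Inl) {..<m} = sum (f \<circ> Inl) {..<m} + s"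
    unfolding upd using assms by (subst sum_fun_upd) auto
  show "unassigned m (f(Inl i := s) \<circ> Inl) = unassigned m (f \<circ> Inl) - 1"
    unfolding upd using assms by (intro unassigned_fun_upd) auto
  show "f(Inl i := s) \<circ> Inr = f \<circ> Inr"
    by (auto simp: fun_eq_iff)
qed

lemma Kmn_fun_upd_Inr:
  assumes "j < n" "f (Inr j) = 0" "s \<noteq> 0"
  shows "sum (f(Inr j := s) \<circ> Inr) {..<n} = sum (f \<circ> Inr) {..<n} + s"
    and "unassigned n (f(Inr j := s) \<circ> Inr) = unassigned n (f \<circ> Inr) - 1"
    and "f(Inr j := s) \<circ> Inl = f \<circ> Inl"
proof -
  have upd: "f(Inr j := s) \<circ> Inr = (f \<circ> Inr)(j := s)"
    by (auto simp: fun_eq_iff)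
  show "sum (f(Inr j := s) \<circ> Inr) {..<n} = sum (f \<circ> Inr) {..<n} + s"
    unfolding upd using assms by (subst sum_fun_upd) auto
  show "unassigned n (f(Inr j := s) \<circ> Inr) = unassigned n (f \<circ> Inr) - 1"
    unfolding upd using assms by (intro unassigned_fun_upd) auto
  show "f(Inr j := s) \<circ> Inl = f \<circ> Inl"
    by (auto simp: fun_eq_iff)
qed

lemma Kmn_moves_split:
  "{G (f(v := s)) | v s. v \<in> Kmn_vertices m n \<and> f v = 0 \<and> s \<in> {1, -1}}
    = {G (f(Inl i := s)) | i s. (i < m \<and> (f \<circ> Inl) i = 0) \<and> s \<in> {1, -1}}
    \<union> {G (f(Inr j := s)) | j s. (j < n \<and> (f \<circ> Inr) j = 0) \<and> s \<in> {1, -1}}"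
  unfolding Kmn_vertices_def comp_def by blast

lemma Kmn_game_val_eq_sums_game_val:
  "k = unassigned m (f \<circ> Inl) + unassigned n (f \<circ> Inr) \<Longrightarrow>
   sign_game_val (Kmn_vertices m n) (Kmn_edges m n) k f p =
   sums_game_val k (sum (f \<circ> Inl) {..<m}) (sum (f \<circ> Inr) {..<n})
     (unassigned m (f \<circ> Inl)) (unassigned n (f \<circ> Inr)) p"
proof (induction k arbitrary: f p)
  case 0
  then show ?case by (simp add: sign_score_Kmn)
next
  case (Suc k)
  let ?V = "Kmn_vertices m n" and ?E = "Kmn_edges m n"
  let ?a = "sum (f \<circ> Inl) {..<m}" and ?b = "sum (f \<circ> Inr) {..<n}"
  let ?ra = "unassigned m (f \<circ> Inl)" and ?rb = "unassigned n (f \<circ> Inr)"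
  have left_move:
    "sign_game_val ?V ?E k (f(Inl i := s)) (\<not> p) = sums_game_val k (?a + s) ?b (?ra - 1) ?rb (\<not> p)"
    if "i < m \<and> f (Inl i) = 0" "s \<in> {1, -1}" for i s
  proof -
    have pos: "?ra > 0"
      using that unassigned_pos_iff by fastforce
    have move: "i < m" "f (Inl i) = 0" "s \<noteq> 0"
      using that by auto
    note upd = Kmn_fun_upd_Inl[where f = f, OF move]
    have "k = unassigned m (f(Inl i := s) \<circ> Inl) + unassigned n (f(Inl i := s) \<circ> Inr)"
      using Suc.prems pos unfolding upd by linarith
    from Suc.IH[OF this] show ?thesis
      unfolding upd .
  qed
  have right_move:
    "sign_game_val ?V ?E k (f(Inr j := s)) (\<not> p) = sums_game_val k ?a (?b + s) ?ra (?rb - 1) (\<not> p)"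
    if "j < n \<and> f (Inr j) = 0" "s \<in> {1, -1}" for j s
  proof -
    have pos: "?rb > 0"
      using that unassigned_pos_iff by fastforce
    have move: "j < n" "f (Inr j) = 0" "s \<noteq> 0"
      using that by auto
    note upd = Kmn_fun_upd_Inr[where f = f, OF move]
    have "k = unassigned m (f(Inr j := s) \<circ> Inl) + unassigned n (f(Inr j := s) \<circ> Inr)"
      using Suc.prems pos unfolding upd by linarith
    from Suc.IH[OF this] show ?thesis
      unfolding upd .
  qed
  have left_moves:
    "{sign_game_val ?V ?E k (f(Inl i := s)) (\<not> p)
        | i s. (i < m \<and> (f \<circ> Inl) i = 0) \<and> s \<in> {1, -1}}
      = choices (?ra > 0) (\<lambda>s. sums_game_val k (?a + s) ?b (?ra - 1) ?rb (\<not> p))"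
    unfolding unassigned_pos_iff by (rule Setcompr_eq_choices) (simp add: left_move)
  have right_moves:
    "{sign_game_val ?V ?E k (f(Inr j := s)) (\<not> p)
        | j s. (j < n \<and> (f \<circ> Inr) j = 0) \<and> s \<in> {1, -1}}
      = choices (?rb > 0) (\<lambda>s. sums_game_val k ?a (?b + s) ?ra (?rb - 1) (\<not> p))"
    unfolding unassigned_pos_iff by (rule Setcompr_eq_choices) (simp add: right_move)
  show ?case
    unfolding sign_game_val.simps sums_game_val.simps
      Kmn_moves_split[where G = "\<lambda>g. sign_game_val ?V ?E k g (\<not> p)"] left_moves right_moves
    by (simp add: optimum_def)
qed

lemma sign_game_outcome_Kmn:
  "sign_game_outcome (Kmn_vertices m n) (Kmn_edges m n) p = parity_val 0 0 (odd m) (odd n) p"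
proof -
  have start: "unassigned m ((\<lambda>_. 0) \<circ> Inl) = m" "unassigned n ((\<lambda>_. 0) \<circ> Inr) = n"
    by (simp_all add: unassigned_def)
  have "sign_game_outcome (Kmn_vertices m n) (Kmn_edges m n) p = sums_game_val (m + n) 0 0 m n p"
    unfolding sign_game_outcome_def card_Kmn_vertices
    using Kmn_game_val_eq_sums_game_val[of "m + n" m "\<lambda>_. 0" n p] unfolding start by simp
  also have "\<dots> = parity_val 0 0 (odd m) (odd n) p"
    by (rule sums_game_val_eq_parity_val) simp
  finally show ?thesis .
qed

lemma parity_val_origin:
  "parity_val 0 0 oa ob p = (if oa \<and> ob then (if p then -1 else 1) else 0)"
  by (cases oa; cases ob) (simp_all add: parity_val_simps optimum_def)

theorem theorem4:
  fixes m n :: nat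
  assumes "m \<ge> 1" and "n \<ge> 1"
  shows "(odd m \<and> odd n \<longrightarrow>
            sign_game_outcome (Kmn_vertices m n) (Kmn_edges m n) True = -1 \<and>
            sign_game_outcome (Kmn_vertices m n) (Kmn_edges m n) False = 1)
       \<and> (even m \<or> even n \<longrightarrow>
            sign_game_outcome (Kmn_vertices m n) (Kmn_edges m n) True = 0 \<and>
            sign_game_outcome (Kmn_vertices m n) (Kmn_edges m n) False = 0)"
  unfolding sign_game_outcome_Kmn parity_val_origin by simp

end
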